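(* If $(h,a)$ is a solution of the DKP equations, i.e. $\partial_{t_j}h=\partial_x H^{(j)}$ and $\partial_{t_j}a=a\,(\tilde H^{(j)}-H^{(j)})$ for all $j\ge 1$, then $\tilde h=\sigma(h,a)=h+a_x/a$ is a solution of the KP equations: $\partial_{t_j}\tilde h=\partial_x\tilde H^{(j)}$ for all $j\ge1$. Moreover, assuming the KP currents satisfy $\partial_{t_j}H^{(k)}=\partial_{t_k}H^{(j)}$ along the KP flows, the DKP flows commute pairwise: $[\partial_{t_j},\partial_{t_k}]\,a=0$ (and $[\partial_{t_j},\partial_{t_k}]\,h=0$).
   Context: Let $x$ be a space variable; all coefficients below are functions of $x$, and a subscript $x$ denotes $\partial_x$. Let $M$ be the affine space of formal Laurent series $h(z)=z+\sum_{j\ge1}h_j z^{-j}$, $A$ the affine space of formal Laurent series $a(z)=z+\sum_{j\ge0}a_j z^{-j}$, and $N=M\times A$. The Faà di Bruno iterates of $h$ are $h^{(0)}=1$, $h^{(j+1)}=(\partial_x+h)h^{(j)}=\partial_x h^{(j)}+h\,h^{(j)}$ for $j\ge0$. For $j\ge0$, the KP current $H^{(j)}$ is the unique Laurent series of the form $H^{(j)}=h^{(j)}+\sum_{l=0}^{j-2}p^j_l[h]\,h^{(l)}$, with the $p^j_l[h]$ differential polynomials in the $h_i$ (independent of $z$), such that $H^{(j)}=z^j+O(z^{-1})$ as $z\to\infty$ (e.g. $H^{(0)}=1$, $H^{(1)}=h$, $H^{(2)}=h_x+h^2-2h_1$). The KP equations are $\partial_{t_j}h=\partial_x H^{(j)}$.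 The maps $\mu,\sigma:N\to M$ are $\mu(h,a)=h$ and $\sigma(h,a)=h+a_x/a$. The DKP equations on $N$ are $\partial_{t_j}h=\partial_xH^{(j)}$, $\partial_{t_j}a=a(\tilde H^{(j)}-H^{(j)})$, where $\tilde H^{(j)}$ denotes the current $H^{(j)}$ evaluated at $\tilde h=\sigma(h,a)$. *)

theory Defs
  imports "HOL-Computational_Algebra.Formal_Laurent_Series"
begin

text \<open>Coefficients live in an abstract commutative ring 'r (the ring of
functions of x and the times), equipped with a derivation Dx (the x-derivative) and
derivations Dt j (the t_j-derivatives), each commuting with Dx.  The Dt j are NOT assumed
to commute with each other (commutation of the flows is part of the conclusion).
A formal Laurent series in z with finitely many positive powers of z is represented as an
element of 'r fls in the variable X = z^{-1}; thus the coefficient of z^k of f is f $$ (-k),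
and z itself is fls_X_inv.\<close>

definition zcoeff :: "'r::zero fls \<Rightarrow> int \<Rightarrow> 'r" where
  "zcoeff f k = fls_nth f (- k)"

definition is_derivation :: "('r::comm_ring_1 \<Rightarrow> 'r) \<Rightarrow> bool" where
  "is_derivation D \<longleftrightarrow> (\<forall>u v. D (u + v) = D u + D v) \<and> (\<forall>u v. D (u * v) = u * D v + D u * v)"

definition fls_cmap :: "('r::zero \<Rightarrow> 'r) \<Rightarrow> 'r fls \<Rightarrow> 'r fls" where
  "fls_cmap D f = Abs_fls (\<lambda>n. D (fls_nth f n))"

definition inM :: "'r::comm_ring_1 fls \<Rightarrow> bool" where
  "inM h \<longleftrightarrow> zcoeff h 1 = 1 \<and> (\<forall>k. k \<ge> 0 \<and> k \<noteq> 1 \<longrightarrow> zcoeff h k = 0)"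

definition inA :: "'r::comm_ring_1 fls \<Rightarrow> bool" where
  "inA a \<longleftrightarrow> zcoeff a 1 = 1 \<and> (\<forall>k. k > 1 \<longrightarrow> zcoeff a k = 0)"

primrec fdb :: "('r::comm_ring_1 \<Rightarrow> 'r) \<Rightarrow> 'r fls \<Rightarrow> nat \<Rightarrow> 'r fls" where
  "fdb Dx h 0 = 1"
| "fdb Dx h (Suc j) = fls_cmap Dx (fdb Dx h j) + h * fdb Dx h j"

text \<open>Differential polynomials (with integer coefficients) in the coefficients h_i of h.\<close>
inductive_set dpoly :: "('r::comm_ring_1 \<Rightarrow> 'r) \<Rightarrow> 'r fls \<Rightarrow> 'r set"
  for Dx :: "'r \<Rightarrow> 'r" and h :: "'r fls" where
  gen: "fls_nth h i \<in> dpoly Dx h"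
| one: "1 \<in> dpoly Dx h"
| add: "u \<in> dpoly Dx h \<Longrightarrow> v \<in> dpoly Dx h \<Longrightarrow> u + v \<in> dpoly Dx h"
| neg: "u \<in> dpoly Dx h \<Longrightarrow> - u \<in> dpoly Dx h"
| mult: "u \<in> dpoly Dx h \<Longrightarrow> v \<in> dpoly Dx h \<Longrightarrow> u * v \<in> dpoly Dx h"
| deriv: "u \<in> dpoly Dx h \<Longrightarrow> Dx u \<in> dpoly Dx h"

text \<open>The KP current H^(j): the unique series h^(j) + sum_{l=0}^{j-2} p_l h^(l), with p_l
differential polynomials in the h_i (independent of z), which equals z^j + O(z^{-1}).\<close>
definition kp_current :: "('r::comm_ring_1 \<Rightarrow> 'r) \<Rightarrow> nat \<Rightarrow> 'r fls \<Rightarrow> 'r fls" where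
  "kp_current Dx j h = (THE H. \<exists>p :: nat \<Rightarrow> 'r.
      (\<forall>l < j - 1. p l \<in> dpoly Dx h) \<and>
      H = fdb Dx h j + (\<Sum>l<j - 1. fls_const (p l) * fdb Dx h l) \<and>
      (\<forall>k \<ge> 0. zcoeff H k = (if k = int j then 1 else 0)))"

text \<open>Quotient f / g of Laurent series (used for g with leading coefficient 1).\<close>
definition fls_quot :: "'r::comm_ring_1 fls \<Rightarrow> 'r fls \<Rightarrow> 'r fls" where
  "fls_quot f g = (THE q. g * q = f)"

definition sigma_map :: "('r::comm_ring_1 \<Rightarrow> 'r) \<Rightarrow> 'r fls \<Rightarrow> 'r fls \<Rightarrow> 'r fls" where
  "sigma_map Dx h a = h + fls_quot (fls_cmap Dx a) a"

definition is_KP_solution :: "('r::comm_ring_1 \<Rightarrow> 'r) \<Rightarrow> (nat \<Rightarrow> 'r \<Rightarrow> 'r) \<Rightarrow> 'r fls \<Rightarrow> bool" where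
  "is_KP_solution Dx Dt h \<longleftrightarrow>
     (\<forall>j \<ge> 1. fls_cmap (Dt j) h = fls_cmap Dx (kp_current Dx j h))"

definition is_DKP_solution :: "('r::comm_ring_1 \<Rightarrow> 'r) \<Rightarrow> (nat \<Rightarrow> 'r \<Rightarrow> 'r) \<Rightarrow> 'r fls \<Rightarrow> 'r fls \<Rightarrow> bool" where
  "is_DKP_solution Dx Dt h a \<longleftrightarrow>
     (\<forall>j \<ge> 1. fls_cmap (Dt j) h = fls_cmap Dx (kp_current Dx j h) \<and>
       fls_cmap (Dt j) a = a * (kp_current Dx j (sigma_map Dx h a) - kp_current Dx j h))"

end

theory Submission
  imports Defs
begin

text \<open>Both claims are identities in a differential ring, independent of the structure of the
KP currents.  Write \<open>a\<^sub>t = a r\<close> with \<open>r = H~ - H\<close>.  Since \<open>a\<close> is invertible, \<open>a\<^sub>x / a\<close> is a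
logarithmic derivative, and commuting \<open>\<partial>\<^sub>x\<close> with \<open>\<partial>\<^sub>t\<close> gives \<open>\<partial>\<^sub>t (a\<^sub>x / a) = \<partial>\<^sub>x r\<close>; hence
\<open>\<partial>\<^sub>t h~ = \<partial>\<^sub>x H + \<partial>\<^sub>x (H~ - H) = \<partial>\<^sub>x H~\<close>.  For the commutation, \<open>\<partial>\<^sub>j \<partial>\<^sub>k a = a (\<partial>\<^sub>j r\<^sub>k + r\<^sub>j r\<^sub>k)\<close>,
and \<open>\<partial>\<^sub>j r\<^sub>k = \<partial>\<^sub>k r\<^sub>j\<close> follows from the assumed symmetry of the currents, applied to the two
KP solutions \<open>h\<close> and \<open>h~\<close>.\<close>

notation fls_nth (infixl "$$" 75)

lemma derivation_add: "is_derivation D \<Longrightarrow> D (u + v) = D u + D v"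
  unfolding is_derivation_def by blast

lemma derivation_mult: "is_derivation D \<Longrightarrow> D (u * v) = u * D v + D u * v"
  unfolding is_derivation_def by blast

lemma derivation_zero: "is_derivation D \<Longrightarrow> D 0 = 0"
  using derivation_add[of D 0 0] by simp

lemma derivation_one: "is_derivation D \<Longrightarrow> D 1 = 0"
  using derivation_mult[of D 1 1] by simp

lemma derivation_minus:
  assumes D: "is_derivation D"
  shows "D (- u) = - D u"
  using derivation_add[OF D, of "- u" u] derivation_zero[OF D] by (simp add: eq_neg_iff_add_eq_0)

lemma derivation_diff: "is_derivation D \<Longrightarrow> D (u - v) = D u - D v"
  by (simp only: derivation_add derivation_minus diff_conv_add_uminus)

lemma derivation_sum: "is_derivation D \<Longrightarrow> D (sum f A) = (\<Sum>i\<in>A. D (f i))"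
  by (induction A rule: infinite_finite_induct) (simp_all add: derivation_zero derivation_add)

lemma fls_nth_cmap:
  assumes "D 0 = 0"
  shows "fls_cmap D f $$ n = D (f $$ n)"
  unfolding fls_cmap_def
proof (rule nth_Abs_fls)
  have "\<forall>\<^sub>\<infinity>n. f $$ (- int n) = 0" by simp
  then show "\<forall>\<^sub>\<infinity>n. D (f $$ (- int n)) = 0" by (rule MOST_mono) (simp add: assms)
qed

lemma fls_nth_cmap_derivation: "is_derivation D \<Longrightarrow> fls_cmap D f $$ n = D (f $$ n)"
  by (simp add: fls_nth_cmap derivation_zero)

lemma fls_times_nth_from_bounds:
  fixes f g :: "'r::comm_ring_1 fls"
  assumes "\<forall>k<m. f $$ k = 0" "\<forall>k<m'. g $$ k = 0"
  shows "(f * g) $$ n = (\<Sum>i=m..n-m'. f $$ i * g $$ (n - i))"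
proof (cases "f = 0 \<or> g = 0")
  case True
  then show ?thesis by auto
next
  case False
  then have m: "m \<le> fls_subdegree f" and m': "m' \<le> fls_subdegree g"
    using assms by (auto intro: fls_subdegree_geI)
  have "(f * g) $$ n = (\<Sum>i=fls_subdegree f..n - fls_subdegree g. f $$ i * g $$ (n - i))"
    by (rule fls_times_nth(2))
  also have "\<dots> = (\<Sum>i=m..n-m'. f $$ i * g $$ (n - i))"
    using m m' by (intro sum.mono_neutral_left) (auto simp: nth_less_subdegree_zero)
  finally show ?thesis .
qed

lemma is_derivation_fls_cmap:
  fixes D :: "'r::comm_ring_1 \<Rightarrow> 'r"
  assumes D: "is_derivation D"
  shows "is_derivation (fls_cmap D)"
  unfolding is_derivation_def
proof (intro conjI allI)
  fix f g :: "'r fls"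
  show "fls_cmap D (f + g) = fls_cmap D f + fls_cmap D g"
    by (rule fls_eqI) (simp add: fls_nth_cmap_derivation[OF D] derivation_add[OF D])
  show "fls_cmap D (f * g) = f * fls_cmap D g + fls_cmap D f * g"
  proof (rule fls_eqI)
    fix n
    define m m' where "m = fls_subdegree f" and "m' = fls_subdegree g"
    have f0: "\<forall>k<m. f $$ k = 0" "\<forall>k<m. fls_cmap D f $$ k = 0"
      by (auto simp: m_def nth_less_subdegree_zero fls_nth_cmap_derivation[OF D] derivation_zero[OF D])
    have g0: "\<forall>k<m'. g $$ k = 0" "\<forall>k<m'. fls_cmap D g $$ k = 0"
      by (auto simp: m'_def nth_less_subdegree_zero fls_nth_cmap_derivation[OF D] derivation_zero[OF D])
    have "fls_cmap D (f * g) $$ n = (\<Sum>i=m..n-m'. D (f $$ i * g $$ (n - i)))"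
      by (simp only: fls_nth_cmap_derivation[OF D] fls_times_nth_from_bounds[OF f0(1) g0(1)]
          derivation_sum[OF D])
    also have "\<dots> = (\<Sum>i=m..n-m'. f $$ i * D (g $$ (n - i))) + (\<Sum>i=m..n-m'. D (f $$ i) * g $$ (n - i))"
      by (simp only: derivation_mult[OF D] sum.distrib)
    also have "\<dots> = (f * fls_cmap D g + fls_cmap D f * g) $$ n"
      by (simp add: fls_nth_cmap_derivation[OF D] fls_times_nth_from_bounds[OF f0(1) g0(2)]
          fls_times_nth_from_bounds[OF f0(2) g0(1)])
    finally show "fls_cmap D (f * g) $$ n = (f * fls_cmap D g + fls_cmap D f * g) $$ n" .
  qed
qed

lemma fls_cmap_commute:
  assumes "is_derivation D" "is_derivation E" "\<And>u. D (E u) = E (D u)"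
  shows "fls_cmap D (fls_cmap E f) = fls_cmap E (fls_cmap D f)"
  by (rule fls_eqI) (simp add: fls_nth_cmap_derivation assms)

lemma inA_right_inverse:
  fixes a :: "'r::comm_ring_1 fls"
  assumes "inA a"
  shows "\<exists>b. a * b = 1 \<and> (\<forall>k<1. b $$ k = 0)"
proof -
  \<comment> \<open>\<open>a = z B(z\<^sup>-\<^sup>1)\<close> for a power series \<open>B\<close> with constant term 1, which is invertible\<close>
  define B where "B = Abs_fps (\<lambda>n. a $$ (int n - 1))"
  have a_lead: "a $$ (-1) = 1"
    using assms by (simp add: inA_def zcoeff_def)
  have a_high: "a $$ k = 0" if "k < -1" for k
  proof -
    have "zcoeff a (- k) = 0" using assms that by (simp add: inA_def)
    then show ?thesis by (simp add: zcoeff_def)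
  qed
  have a_B: "a = fls_shift 1 (fps_to_fls B)"
    by (rule fls_eqI) (auto simp: B_def a_high)
  define C where "C = fps_right_inverse B 1"
  have "B * C = 1"
    unfolding C_def using a_lead by (intro fps_right_inverse) (simp add: B_def)
  then have "a * fls_shift (-1) (fps_to_fls C) = 1"
    by (simp add: a_B fls_times_both_shifted_simp fls_times_fps_to_fls[symmetric])
  then show ?thesis by force
qed

lemma fls_quot_right_inverse:
  fixes a b f :: "'r::comm_ring_1 fls"
  assumes ab: "a * b = 1"
  shows "fls_quot f a = b * f"
  unfolding fls_quot_def
proof (rule the_equality)
  show "a * (b * f) = f" by (simp add: mult.assoc[symmetric] ab)
next
  fix q assume "a * q = f"
  then have "b * (a * q) = b * f" by simp
  then show "q = b * f" by (simp add: mult.assoc[symmetric] mult.commute[of b a] ab)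
qed

lemma inA_cmap_nth_neg:
  assumes D: "is_derivation D" and "inA a" and "k < 0"
  shows "fls_cmap D a $$ k = 0"
proof -
  have "zcoeff a (- k) = (if k = -1 then 1 else 0)"
    using assms(2,3) by (auto simp: inA_def)
  then have "a $$ k = (if k = -1 then 1 else 0)"
    by (simp add: zcoeff_def)
  then show ?thesis by (simp add: fls_nth_cmap_derivation[OF D] derivation_zero[OF D] derivation_one[OF D])
qed

lemma sigma_map_eq:
  assumes "a * b = 1"
  shows "sigma_map Dx h a = h + b * fls_cmap Dx a"
  by (simp add: sigma_map_def fls_quot_right_inverse[OF assms])

lemma sigma_map_inM:
  assumes D: "is_derivation Dx" and "inM h" "inA a"
  shows "inM (sigma_map Dx h a)"
proof -
  obtain b where ab: "a * b = 1" and b0: "\<forall>k<1. b $$ k = 0"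
    using inA_right_inverse[OF \<open>inA a\<close>] by blast
  have "(b * fls_cmap Dx a) $$ k = 0" if "k \<le> 0" for k
    using that inA_cmap_nth_neg[OF D \<open>inA a\<close>]
    by (simp add: fls_times_nth_from_bounds[OF b0, of 0])
  then show ?thesis
    using \<open>inM h\<close> by (auto simp: sigma_map_eq[OF ab] inM_def zcoeff_def)
qed

lemma derivation_log_derivative:
  fixes a b r :: "'a::comm_ring_1"
  assumes D: "is_derivation D" and E: "is_derivation E" and DE: "D (E a) = E (D a)"
    and ab: "a * b = 1" and Ea: "E a = a * r"
  shows "E (b * D a) = D r"
proof -
  have "E (D a) = E (a * (b * D a))"
    using ab by (simp add: mult.assoc[symmetric])
  also have "\<dots> = a * E (b * D a) + (a * b) * (r * D a)"
    by (simp add: derivation_mult[OF E] Ea algebra_simps)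
  finally have "E (D a) = a * E (b * D a) + r * D a"
    by (simp add: ab)
  then have flow_log: "a * E (b * D a) = E (D a) - D a * r"
    by (simp add: algebra_simps)
  have "D (E a) = a * D r + D a * r"
    by (simp add: Ea derivation_mult[OF D])
  then have D_multiplier: "a * D r = E (D a) - D a * r"
    using DE by (simp add: algebra_simps)
  have "E (b * D a) = b * (a * E (b * D a))"
    using ab by (simp add: mult.assoc[symmetric] mult.commute[of b a])
  also have "\<dots> = b * (a * D r)" by (simp only: flow_log D_multiplier)
  also have "\<dots> = D r"
    using ab by (simp add: mult.assoc[symmetric] mult.commute[of b a])
  finally show ?thesis .
qed

lemma derivations_commute_at_eigenvector:
  fixes a r s :: "'a::comm_ring_1"
  assumes E: "is_derivation E" and F: "is_derivation F"
    and Ea: "E a = a * r" and Fa: "F a = a * s" and compat: "E s = F r"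
  shows "E (F a) = F (E a)"
  by (simp add: Ea Fa derivation_mult[OF E] derivation_mult[OF F] compat algebra_simps)

lemma KP_solution_sigma_map:
  assumes Dx: "is_derivation Dx" and Dt: "\<And>j. is_derivation (Dt j)"
    and comm: "\<And>j u. Dt j (Dx u) = Dx (Dt j u)"
    and "inA a" and DKP: "is_DKP_solution Dx Dt h a"
  shows "is_KP_solution Dx Dt (sigma_map Dx h a)"
  unfolding is_KP_solution_def
proof (intro allI impI)
  fix j :: nat assume "j \<ge> 1"
  let ?H = "kp_current Dx j h" and ?H' = "kp_current Dx j (sigma_map Dx h a)"
  obtain b where ab: "a * b = 1"
    using inA_right_inverse[OF \<open>inA a\<close>] by blast
  have flow_h: "fls_cmap (Dt j) h = fls_cmap Dx ?H"
    and flow_a: "fls_cmap (Dt j) a = a * (?H' - ?H)"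
    using DKP \<open>j \<ge> 1\<close> by (simp_all add: is_DKP_solution_def)
  have "fls_cmap (Dt j) (b * fls_cmap Dx a) = fls_cmap Dx (?H' - ?H)"
    using is_derivation_fls_cmap[OF Dx] is_derivation_fls_cmap[OF Dt]
      fls_cmap_commute[of Dx "Dt j", OF Dx Dt comm[symmetric]] ab flow_a
    by (rule derivation_log_derivative)
  then show "fls_cmap (Dt j) (sigma_map Dx h a) = fls_cmap Dx ?H'"
    by (simp add: sigma_map_eq[OF ab] flow_h derivation_add[OF is_derivation_fls_cmap[OF Dt]]
        derivation_diff[OF is_derivation_fls_cmap[OF Dx]])
qed

lemma DKP_solution_imp_KP_solution:
  "is_DKP_solution Dx Dt h a \<Longrightarrow> is_KP_solution Dx Dt h"
  by (simp add: is_DKP_solution_def is_KP_solution_def)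

lemma DKP_flows_commute:
  assumes Dx: "is_derivation Dx" and Dt: "\<And>j. is_derivation (Dt j)"
    and comm: "\<And>j u. Dt j (Dx u) = Dx (Dt j u)"
    and DKP: "is_DKP_solution Dx Dt h a"
    and sym_h: "\<And>j k. j \<ge> 1 \<Longrightarrow> k \<ge> 1 \<Longrightarrow>
      fls_cmap (Dt j) (kp_current Dx k h) = fls_cmap (Dt k) (kp_current Dx j h)"
    and sym_sigma: "\<And>j k. j \<ge> 1 \<Longrightarrow> k \<ge> 1 \<Longrightarrow>
      fls_cmap (Dt j) (kp_current Dx k (sigma_map Dx h a))
        = fls_cmap (Dt k) (kp_current Dx j (sigma_map Dx h a))"
    and j: "j \<ge> 1" and k: "k \<ge> 1"
  shows "fls_cmap (Dt j) (fls_cmap (Dt k) a) = fls_cmap (Dt k) (fls_cmap (Dt j) a)"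
    and "fls_cmap (Dt j) (fls_cmap (Dt k) h) = fls_cmap (Dt k) (fls_cmap (Dt j) h)"
proof -
  define r where "r i = kp_current Dx i (sigma_map Dx h a) - kp_current Dx i h" for i
  have flow_h: "fls_cmap (Dt i) h = fls_cmap Dx (kp_current Dx i h)"
    and flow_a: "fls_cmap (Dt i) a = a * r i" if "i \<ge> 1" for i
    using DKP that by (simp_all add: is_DKP_solution_def r_def)
  have "fls_cmap (Dt j) (r k) = fls_cmap (Dt k) (r j)"
    by (simp add: r_def derivation_diff[OF is_derivation_fls_cmap[OF Dt]] sym_h[OF j k] sym_sigma[OF j k])
  with is_derivation_fls_cmap[OF Dt] is_derivation_fls_cmap[OF Dt] flow_a[OF j] flow_a[OF k]
  show "fls_cmap (Dt j) (fls_cmap (Dt k) a) = fls_cmap (Dt k) (fls_cmap (Dt j) a)"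
    by (rule derivations_commute_at_eigenvector)
  have Dt_Dx: "fls_cmap (Dt i) (fls_cmap Dx f) = fls_cmap Dx (fls_cmap (Dt i) f)" for i f
    by (rule fls_cmap_commute[of "Dt i" Dx, OF Dt Dx comm])
  have "fls_cmap (Dt j) (fls_cmap (Dt k) h) = fls_cmap Dx (fls_cmap (Dt j) (kp_current Dx k h))"
    by (simp add: flow_h[OF k] Dt_Dx)
  also have "\<dots> = fls_cmap Dx (fls_cmap (Dt k) (kp_current Dx j h))"
    by (simp add: sym_h[OF j k])
  also have "\<dots> = fls_cmap (Dt k) (fls_cmap (Dt j) h)"
    by (simp add: flow_h[OF j] Dt_Dx)
  finally show "fls_cmap (Dt j) (fls_cmap (Dt k) h) = fls_cmap (Dt k) (fls_cmap (Dt j) h)" .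
qed

theorem mainTheorem1:
  fixes Dx :: "'r::comm_ring_1 \<Rightarrow> 'r" and Dt :: "nat \<Rightarrow> 'r \<Rightarrow> 'r"
    and h a :: "'r fls"
  assumes Dx_der: "is_derivation Dx"
    and Dt_der: "\<And>j. is_derivation (Dt j)"
    and Dt_Dx_comm: "\<And>j u. Dt j (Dx u) = Dx (Dt j u)"
    and hM: "inM h" and aA: "inA a"
    and DKP: "is_DKP_solution Dx Dt h a"
  shows "is_KP_solution Dx Dt (sigma_map Dx h a)
    \<and> ((\<forall>g. inM g \<longrightarrow> is_KP_solution Dx Dt g \<longrightarrow>
           (\<forall>j\<ge>1. \<forall>k\<ge>1. fls_cmap (Dt j) (kp_current Dx k g) = fls_cmap (Dt k) (kp_current Dx j g)))
       \<longrightarrow> (\<forall>j\<ge>1. \<forall>k\<ge>1. \<forall>n.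
              Dt j (Dt k (fls_nth a n)) = Dt k (Dt j (fls_nth a n))
            \<and> Dt j (Dt k (fls_nth h n)) = Dt k (Dt j (fls_nth h n))))"
proof (intro conjI impI allI)
  have KP_sigma: "is_KP_solution Dx Dt (sigma_map Dx h a)"
    using Dx_der Dt_der Dt_Dx_comm aA DKP by (rule KP_solution_sigma_map)
  then show "is_KP_solution Dx Dt (sigma_map Dx h a)" .
  fix j k :: nat and n :: int
  assume sym: "\<forall>g. inM g \<longrightarrow> is_KP_solution Dx Dt g \<longrightarrow>
      (\<forall>j\<ge>1. \<forall>k\<ge>1. fls_cmap (Dt j) (kp_current Dx k g) = fls_cmap (Dt k) (kp_current Dx j g))"
    and j: "j \<ge> 1" and k: "k \<ge> 1"
  note sym_h = sym[rule_format, OF hM DKP_solution_imp_KP_solution[OF DKP]]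
  note sym_sigma = sym[rule_format, OF sigma_map_inM[OF Dx_der hM aA] KP_sigma]
  note commute = DKP_flows_commute[OF Dx_der Dt_der Dt_Dx_comm DKP sym_h sym_sigma j k]
  show "Dt j (Dt k (a $$ n)) = Dt k (Dt j (a $$ n))"
    using arg_cong[OF commute(1), of "\<lambda>f. f $$ n"] by (simp add: fls_nth_cmap_derivation[OF Dt_der])
  show "Dt j (Dt k (h $$ n)) = Dt k (Dt j (h $$ n))"
    using arg_cong[OF commute(2), of "\<lambda>f. f $$ n"] by (simp add: fls_nth_cmap_derivation[OF Dt_der])
qed

end
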